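(* Let $k$ be a field, $A=kQ_A/I_A$ an indecomposable radical square zero algebra, and $B$ the algebra obtained from $A$ by gluing a source vertex and a sink vertex of $Q_A$. Then for every $n\ge2$ the map $\psi_n$ restricts to an injective map $\mathrm{Ker}(\delta^n_A)\hookrightarrow\mathrm{Ker}(\delta^n_B)$ which maps $\mathrm{Im}(\delta^{n-1}_A)$ into $\mathrm{Im}(\delta^{n-1}_B)$. In addition, $\dim_k\mathrm{HH}^n(B)-\dim_k\mathrm{HH}^n(A)\ge0$.
   Context: A radical square zero algebra is $kQ/I$ with $Q$ a finite quiver and $I$ generated by all paths of length 2; indecomposable means $Q$ connected. Gluing a source $e_1$ (no incoming arrows) and a sink $e_m$ (no outgoing arrows), both non-isolated: $B$ is the subalgebra generated by $e_1+e_m$, the other vertex idempotents and all arrows; $B\cong kQ_B/I_B$, $Q_B$ obtained by identifying $e_1,e_m$ into one vertex $f_1$, $I_B$ generated by all length-2 paths of $Q_B$. For a path $p=a_r\cdots a_1$ of $Q_A$, $p^*=a_r^*\cdots a_1^*$ is its image in $Q_B$, and vertices map to their images. $Q_n$ denotes the set of paths of length $n$; for path sets $X,Y$, $k(X\|Y)$ is the vector space with basis the pairs $x\|y$, $x\in X$, $y\in Y$, with the same source and same target. Cibils' complex for a radical square zero algebra $kQ/I$: $C^n=k(Q_n\|Q_0)\oplus k(Q_n\|Q_1)$ and $\delta^n:C^n\to C^{n+1}$, $\delta^n(x,y)=(0,D_n(x))$, where $D_n(\gamma\|e)=\sum_{a\in Q_1,\,s(a)=e}a\gamma\|a+(-1)^{n+1}\sum_{b\in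 Q_1,\,t(b)=e}\gamma b\|b$; its cohomology in degree $n\ge1$ is $\mathrm{HH}^n=\mathrm{Ker}\,\delta^n/\mathrm{Im}\,\delta^{n-1}$. $\delta^n_A,\delta^n_B$ denote these for $A,B$. $\psi_n:C^n_A\to C^n_B$ is the linear map $\gamma\|x\mapsto\gamma^*\|x^*$ for $\gamma\in(Q_A)_n$, $x\in(Q_A)_0\cup(Q_A)_1$. *)

theory Defs
  imports Complex_Main "HOL-Library.Function_Algebras"
begin

text \<open>A path of length n (n >= 1) a_n ... a_1 is represented by the list
[a_1, ..., a_n] of its arrows in order of traversal.\<close>

definition quiver :: "'v set \<Rightarrow> 'e set \<Rightarrow> ('e \<Rightarrow> 'v) \<Rightarrow> ('e \<Rightarrow> 'v) \<Rightarrow> bool" where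
  "quiver V E s t \<longleftrightarrow> finite V \<and> finite E \<and> (\<forall>a\<in>E. s a \<in> V \<and> t a \<in> V)"

text \<open>Connected quiver (= the radical square zero algebra kQ/I is indecomposable).\<close>
definition quiver_connected :: "'v set \<Rightarrow> 'e set \<Rightarrow> ('e \<Rightarrow> 'v) \<Rightarrow> ('e \<Rightarrow> 'v) \<Rightarrow> bool" where
  "quiver_connected V E s t \<longleftrightarrow> V \<noteq> {} \<and>
     (\<forall>u\<in>V. \<forall>w\<in>V. (u, w) \<in> (\<Union>a\<in>E. {(s a, t a), (t a, s a)})\<^sup>*)"

definition paths :: "'e set \<Rightarrow> ('e \<Rightarrow> 'v) \<Rightarrow> ('e \<Rightarrow> 'v) \<Rightarrow> nat \<Rightarrow> 'e list set" where
  "paths E s t n = {p. length p = n \<and> set p \<subseteq> E \<and>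
      (\<forall>i. Suc i < n \<longrightarrow> t (p ! i) = s (p ! Suc i))}"

definition psrc :: "('e \<Rightarrow> 'v) \<Rightarrow> 'e list \<Rightarrow> 'v" where "psrc s p = s (hd p)"
definition ptgt :: "('e \<Rightarrow> 'v) \<Rightarrow> 'e list \<Rightarrow> 'v" where "ptgt t p = t (last p)"

text \<open>Basis of C^n = k(Q_n || Q_0) + k(Q_n || Q_1): pairs gamma || x, with x a vertex
(Inl) or an arrow (Inr), parallel to gamma.  (Used for n >= 1.)\<close>
definition cbasis :: "'v set \<Rightarrow> 'e set \<Rightarrow> ('e \<Rightarrow> 'v) \<Rightarrow> ('e \<Rightarrow> 'v) \<Rightarrow> nat
    \<Rightarrow> ('e list \<times> ('v + 'e)) set" where
  "cbasis V E s t n =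
     {(g, Inl e) | g e. g \<in> paths E s t n \<and> e \<in> V \<and> psrc s g = e \<and> ptgt t g = e} \<union>
     {(g, Inr a) | g a. g \<in> paths E s t n \<and> a \<in> E \<and> psrc s g = s a \<and> ptgt t g = t a}"

text \<open>Cochains: k-linear combinations of basis elements, as coefficient functions.\<close>
definition cochains :: "'v set \<Rightarrow> 'e set \<Rightarrow> ('e \<Rightarrow> 'v) \<Rightarrow> ('e \<Rightarrow> 'v) \<Rightarrow> nat
    \<Rightarrow> ('e list \<times> ('v + 'e) \<Rightarrow> 'k::field) set" where
  "cochains V E s t n = {f. \<forall>q. q \<notin> cbasis V E s t n \<longrightarrow> f q = 0}"

definition indic :: "'b \<Rightarrow> 'b \<Rightarrow> 'k::field" where
  "indic b q = (if q = b then 1 else 0)"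

text \<open>Image of a basis element under delta^n: delta(gamma||e) = (0, D_n(gamma||e)),
delta(gamma||a) = 0.\<close>
definition Dbasis :: "'e set \<Rightarrow> ('e \<Rightarrow> 'v) \<Rightarrow> ('e \<Rightarrow> 'v) \<Rightarrow> nat
    \<Rightarrow> 'e list \<times> ('v + 'e) \<Rightarrow> ('e list \<times> ('v + 'e) \<Rightarrow> 'k::field)" where
  "Dbasis E s t n b = (case b of
      (g, Inl e) \<Rightarrow> (\<lambda>q. (\<Sum>a\<in>{a\<in>E. s a = e}. indic (g @ [a], Inr a) q)
                      + (-1) ^ (n + 1) * (\<Sum>c\<in>{c\<in>E. t c = e}. indic (c # g, Inr c) q))
    | (g, Inr a) \<Rightarrow> (\<lambda>q. 0))"

definition delta :: "'v set \<Rightarrow> 'e set \<Rightarrow> ('e \<Rightarrow> 'v) \<Rightarrow> ('e \<Rightarrow> 'v) \<Rightarrow> nat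
    \<Rightarrow> ('e list \<times> ('v + 'e) \<Rightarrow> 'k::field) \<Rightarrow> ('e list \<times> ('v + 'e) \<Rightarrow> 'k)" where
  "delta V E s t n f = (\<lambda>q. \<Sum>b\<in>cbasis V E s t n. f b * Dbasis E s t n b q)"

definition kerD :: "'v set \<Rightarrow> 'e set \<Rightarrow> ('e \<Rightarrow> 'v) \<Rightarrow> ('e \<Rightarrow> 'v) \<Rightarrow> nat
    \<Rightarrow> ('e list \<times> ('v + 'e) \<Rightarrow> 'k::field) set" where
  "kerD V E s t n = {f \<in> cochains V E s t n. delta V E s t n f = 0}"

definition imD :: "'v set \<Rightarrow> 'e set \<Rightarrow> ('e \<Rightarrow> 'v) \<Rightarrow> ('e \<Rightarrow> 'v) \<Rightarrow> nat
    \<Rightarrow> ('e list \<times> ('v + 'e) \<Rightarrow> 'k::field) set" where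
  "imD V E s t n = delta V E s t n ` cochains V E s t n"

definition kdim :: "('x \<Rightarrow> 'k::field) set \<Rightarrow> nat" where
  "kdim S = vector_space.dim (\<lambda>c f x. c * f x) S"

definition dimHH :: "'v set \<Rightarrow> 'e set \<Rightarrow> ('e \<Rightarrow> 'v) \<Rightarrow> ('e \<Rightarrow> 'v) \<Rightarrow> nat \<Rightarrow> 'k::field itself \<Rightarrow> int" where
  "dimHH V E s t n _ = int (kdim (kerD V E s t n :: ('e list \<times> ('v + 'e) \<Rightarrow> 'k) set))
                      - int (kdim (imD V E s t (n - 1) :: ('e list \<times> ('v + 'e) \<Rightarrow> 'k) set))"

text \<open>Gluing the source e1 and the sink em: em is identified with e1 (the glued vertex f_1
is represented by e1); arrows are unchanged (a* = a).\<close>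
definition glue :: "'v \<Rightarrow> 'v \<Rightarrow> 'v \<Rightarrow> 'v" where
  "glue e1 em v = (if v = em then e1 else v)"

definition star_basis :: "'v \<Rightarrow> 'v \<Rightarrow> 'e list \<times> ('v + 'e) \<Rightarrow> 'e list \<times> ('v + 'e)" where
  "star_basis e1 em b = (case b of (g, Inl v) \<Rightarrow> (g, Inl (glue e1 em v)) | (g, Inr a) \<Rightarrow> (g, Inr a))"

definition psi :: "'v set \<Rightarrow> 'e set \<Rightarrow> ('e \<Rightarrow> 'v) \<Rightarrow> ('e \<Rightarrow> 'v) \<Rightarrow> 'v \<Rightarrow> 'v \<Rightarrow> nat
    \<Rightarrow> ('e list \<times> ('v + 'e) \<Rightarrow> 'k::field) \<Rightarrow> ('e list \<times> ('v + 'e) \<Rightarrow> 'k)" where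
  "psi V E s t e1 em n f = (\<lambda>q. \<Sum>b\<in>cbasis V E s t n. f b * indic (star_basis e1 em b) q)"

end

theory Submission
  imports Defs
begin

(* Paths of Q_A of positive length never start at the sink e_m nor end at the source e_1.
   Hence gluing fixes every basis element of C^n_A (n >= 1), the differentials of B restrict
   to those of A, and psi_n is the inclusion of the subcomplex C_A into C_B.  Moreover
   Ker delta^n_A \<inter> Im delta^(n-1)_B = Im delta^(n-1)_A, since delta_B of a basis element of
   C^(n-1)_B outside C^(n-1)_A has no component on C^n_A.  For the subspaces Ker_A and Im_B
   of Ker_B this gives dim Ker_A + dim Im_B <= dim Ker_B + dim Im_A, which is the inequality
   dim HH^n(A) <= dim HH^n(B). *)

lemma (in vector_space) dim_add_le_dim_Int:
  assumes "subspace S" "subspace T" "S \<subseteq> U" "T \<subseteq> U" "U \<subseteq> span F" "finite F"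
  shows "dim S + dim T \<le> dim U + dim (S \<inter> T)"
proof -
  have finite_indep: "finite B" if "B \<subseteq> U" "independent B" for B
    using independent_span_bound[OF \<open>finite F\<close> that(2)] that(1) \<open>U \<subseteq> span F\<close> by blast
  obtain P where P: "P \<subseteq> S \<inter> T" "independent P" "S \<inter> T \<subseteq> span P" "card P = dim (S \<inter> T)"
    by (rule basis_exists)
  obtain R where R: "R \<subseteq> T" "independent R" "T \<subseteq> span R" "card R = dim T"
    by (rule basis_exists)
  obtain B where B: "R \<subseteq> B" "B \<subseteq> R \<union> S" "independent B" "R \<union> S \<subseteq> span B"
    using maximal_independent_subset_extend[of R "R \<union> S"] R(2) by blast
  obtain W where W: "W \<subseteq> U" "independent W" "U \<subseteq> span W" "card W = dim U"
    by (rule basis_exists)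
  have "B \<subseteq> U"
    using B(2) R(1) assms(3,4) by auto
  then have fin: "finite P" "finite B" "finite W"
    using finite_indep P(1,2) B(3) W(1,2) assms(3) by auto
  have "card B = dim B"
    using B(3) by (simp add: dim_eq_card_independent)
  also have "\<dots> \<le> card W"
    using \<open>B \<subseteq> U\<close> W(3) fin(3) by (intro dim_le_card) auto
  finally have card_B: "card B \<le> dim U"
    using W(4) by simp
  have "S \<subseteq> span (P \<union> (B - R))"
  proof
    fix x assume "x \<in> S"
    then have "x \<in> span (R \<union> (B - R))"
      using B(1,4) by (auto simp: Un_absorb1)
    then obtain r y where x: "x = r + y" and r: "r \<in> span R" and y: "y \<in> span (B - R)"
      unfolding span_Un by blast
    have "y \<in> S"
      using y B(2) span_minimal[OF _ \<open>subspace S\<close>, of "B - R"] by auto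
    then have "r \<in> S"
      using x \<open>x \<in> S\<close> subspace_diff[OF \<open>subspace S\<close>] by force
    moreover have "r \<in> T"
      using r R(1) span_minimal[OF _ \<open>subspace T\<close>] by auto
    ultimately have "r \<in> span P"
      using P(3) by auto
    then show "x \<in> span (P \<union> (B - R))"
      using x y by (auto simp: span_Un)
  qed
  then have "dim S \<le> card (P \<union> (B - R))"
    using fin by (intro dim_le_card) auto
  also have "\<dots> \<le> card P + card (B - R)"
    by (rule card_Un_le)
  also have "card (B - R) = card B - card R"
    using B(1) fin(2) by (meson card_Diff_subset finite_subset)
  finally show ?thesis
    using card_B P(4) R(4) card_mono[OF fin(2) B(1)] by linarith
qed

type_synonym ('v, 'e, 'k) cochain = "'e list \<times> ('v + 'e) \<Rightarrow> 'k"

interpretation fun_vs: vector_space "\<lambda>c (f :: 'x \<Rightarrow> 'k::field) x. c * f x"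
  by unfold_locales (auto simp: fun_eq_iff algebra_simps)

lemma paths_hd_last:
  assumes "g \<in> paths E s t n" "1 \<le> n"
  shows "g \<noteq> [] \<and> hd g \<in> E \<and> last g \<in> E"
proof -
  have "g \<noteq> []" "set g \<subseteq> E"
    using assms by (auto simp: paths_def)
  then show ?thesis
    using hd_in_set last_in_set by blast
qed

lemma paths_snoc_iff:
  assumes "g \<noteq> []"
  shows "g @ [a] \<in> paths E s t (Suc m) \<longleftrightarrow> g \<in> paths E s t m \<and> a \<in> E \<and> t (last g) = s a"
proof (cases "length g = m")
  case True
  have "(\<forall>i. Suc i < Suc m \<longrightarrow> t ((g @ [a]) ! i) = s ((g @ [a]) ! Suc i)) \<longleftrightarrow>
        (\<forall>i. Suc i < m \<longrightarrow> t (g ! i) = s (g ! Suc i)) \<and> t (last g) = s a"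
    using True assms by (auto simp: nth_append last_conv_nth less_Suc_eq) (metis diff_Suc_Suc minus_nat.diff_0)
  then show ?thesis using True unfolding paths_def by auto
qed (auto simp: paths_def)

lemma paths_Cons_iff:
  assumes "g \<noteq> []"
  shows "c # g \<in> paths E s t (Suc m) \<longleftrightarrow> g \<in> paths E s t m \<and> c \<in> E \<and> t c = s (hd g)"
proof (cases "length g = m")
  case True
  have "(\<forall>i. Suc i < Suc m \<longrightarrow> t ((c # g) ! i) = s ((c # g) ! Suc i)) \<longleftrightarrow>
        (\<forall>i. Suc i < m \<longrightarrow> t (g ! i) = s (g ! Suc i)) \<and> t c = s (hd g)"
    using True assms by (auto simp: hd_conv_nth nth_Cons less_Suc_eq_0_disj split: nat.splits)
  then show ?thesis using True unfolding paths_def by auto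
qed (auto simp: paths_def)

lemma finite_cbasis:
  assumes "quiver V E s t"
  shows "finite (cbasis V E s t n)"
proof -
  have "finite (paths E s t n)"
    using assms finite_lists_length_eq[of E n] unfolding quiver_def paths_def
    by (auto elim: finite_subset[rotated])
  moreover have "cbasis V E s t n \<subseteq> paths E s t n \<times> (Inl ` V \<union> Inr ` E)"
    unfolding cbasis_def by auto
  ultimately show ?thesis
    using assms unfolding quiver_def by (auto elim: finite_subset)
qed

lemma cochain_vanishes: "f \<in> cochains V E s t n \<Longrightarrow> q \<notin> cbasis V E s t n \<Longrightarrow> f q = 0"
  unfolding cochains_def by blast

lemma sum_apply: "sum h S x = (\<Sum>b\<in>S. h b x)"
  by (induction S rule: infinite_finite_induct) auto

lemma cochain_expansion:
  assumes "f \<in> cochains V E s t n" "finite (cbasis V E s t n)"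
  shows "(\<Sum>b\<in>cbasis V E s t n. f b * indic b q) = f q"
  using assms by (cases q) (auto simp: indic_def cochains_def if_distrib cong: if_cong)

lemma cochains_subset_span:
  assumes "quiver V E s t"
  shows "cochains V E s t n \<subseteq> fun_vs.span (indic ` cbasis V E s t n)"
proof
  fix f :: "_ \<Rightarrow> 'k::field"
  assume f: "f \<in> cochains V E s t n"
  have "f = (\<Sum>b\<in>cbasis V E s t n. (\<lambda>q. f b * indic b q))"
    using cochain_expansion[OF f finite_cbasis[OF assms]] by (auto simp: fun_eq_iff sum_apply)
  also have "\<dots> \<in> fun_vs.span (indic ` cbasis V E s t n)"
    by (intro fun_vs.span_sum fun_vs.span_scale fun_vs.span_base) auto
  finally show "f \<in> fun_vs.span (indic ` cbasis V E s t n)" .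
qed

lemma Dbasis_Inr: "Dbasis E s t n (g, Inr a) = (\<lambda>q. 0)"
  by (simp add: Dbasis_def)

lemma delta_Inl: "delta V E s t n f (g, Inl v) = 0"
  by (auto simp: delta_def Dbasis_def indic_def intro!: sum.neutral split: prod.splits sum.splits)

lemma delta_eq_0_if_vanishes_on_Inl:
  assumes "\<And>g v. h (g, Inl v) = 0"
  shows "delta V E s t n h = 0"
proof -
  have "h b * Dbasis E s t n b q = 0" for b q
  proof (cases b)
    case (Pair g x)
    then show ?thesis
      using assms by (cases x) (simp_all add: Dbasis_Inr)
  qed
  then have "delta V E s t n h q = 0" for q
    unfolding delta_def by (intro sum.neutral) blast
  then show ?thesis
    by (auto simp: fun_eq_iff)
qed

lemma delta_delta: "delta V E s t m (delta V E s t n f) = 0"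
  by (rule delta_eq_0_if_vanishes_on_Inl) (rule delta_Inl)

lemma Dbasis_eq_0_off_cbasis:
  assumes "b \<in> cbasis V E s t n" "1 \<le> n" "q \<notin> cbasis V E s t (Suc n)"
  shows "Dbasis E s t n b q = (0::'k::field)"
proof (cases b)
  case (Pair g x)
  show ?thesis
  proof (cases x)
    case (Inl e)
    have g: "g \<in> paths E s t n" "e \<in> V" "s (hd g) = e" "t (last g) = e"
      using assms(1) Pair Inl by (auto simp: cbasis_def psrc_def ptgt_def)
    have "g \<noteq> []"
      using paths_hd_last[OF g(1) assms(2)] by blast
    then have "(g @ [a], Inr a) \<in> cbasis V E s t (Suc n)" if "a \<in> E" "s a = e" for a
      using g that by (auto simp: cbasis_def psrc_def ptgt_def paths_snoc_iff)
    moreover have "(c # g, Inr c) \<in> cbasis V E s t (Suc n)" if "c \<in> E" "t c = e" for c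
      using g that \<open>g \<noteq> []\<close> by (auto simp: cbasis_def psrc_def ptgt_def paths_Cons_iff)
    ultimately have "(\<Sum>a\<in>{a\<in>E. s a = e}. indic (g @ [a], Inr a) q) = (0::'k)"
      and "(\<Sum>c\<in>{c\<in>E. t c = e}. indic (c # g, Inr c) q) = (0::'k)"
      using assms(3) by (auto simp: indic_def intro!: sum.neutral)
    then show ?thesis
      by (simp add: Pair Inl Dbasis_def)
  qed (simp add: Pair Dbasis_Inr)
qed

lemma delta_in_cochains:
  assumes "1 \<le> n"
  shows "delta V E s t n f \<in> cochains V E s t (Suc n)"
  unfolding cochains_def delta_def
proof (intro CollectI allI impI)
  fix q
  assume "q \<notin> cbasis V E s t (Suc n)"
  then show "(\<Sum>b\<in>cbasis V E s t n. f b * Dbasis E s t n b q) = 0"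
    by (simp add: Dbasis_eq_0_off_cbasis[OF _ assms \<open>q \<notin> _\<close>])
qed

lemma imD_subset_kerD:
  assumes "1 \<le> n"
  shows "imD V E s t n \<subseteq> kerD V E s t (Suc n)"
  using delta_in_cochains[OF assms] by (auto simp: imD_def kerD_def delta_delta)

lemma delta_in_imD: "delta V E s t n y \<in> imD V E s t n"
proof -
  define y' where "y' q = (if q \<in> cbasis V E s t n then y q else 0)" for q
  have "delta V E s t n y' = delta V E s t n y"
    by (simp add: y'_def delta_def)
  moreover have "y' \<in> cochains V E s t n"
    by (simp add: y'_def cochains_def)
  ultimately show ?thesis
    unfolding imD_def by (rule image_eqI[OF sym])
qed

lemma delta_add: "delta V E s t n (f + g) = delta V E s t n f + delta V E s t n g"
  by (simp add: delta_def fun_eq_iff algebra_simps sum.distrib)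

lemma delta_scale: "delta V E s t n (\<lambda>x. c * f x) = (\<lambda>x. c * delta V E s t n f x)"
  by (simp add: delta_def fun_eq_iff algebra_simps sum_distrib_left)

lemma delta_zero: "delta V E s t n 0 = 0"
  by (simp add: delta_def fun_eq_iff)

lemma subspace_kerD: "fun_vs.subspace (kerD V E s t n)"
  by (auto simp: fun_vs.subspace_def kerD_def cochains_def delta_add delta_scale delta_zero fun_eq_iff)

lemma subspace_imD: "fun_vs.subspace (imD V E s t n)"
proof -
  have "imD V E s t n = range (delta V E s t n)"
    using delta_in_imD by (auto simp: imD_def)
  show ?thesis
    unfolding fun_vs.subspace_def \<open>imD V E s t n = range (delta V E s t n)\<close>
  proof (intro conjI ballI allI)
    show "0 \<in> range (delta V E s t n)"
      using delta_zero by (metis rangeI)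
    show "f + g \<in> range (delta V E s t n)" if "f \<in> range (delta V E s t n)" "g \<in> range (delta V E s t n)" for f g
      using that by (auto simp flip: delta_add)
    show "(\<lambda>x. c * f x) \<in> range (delta V E s t n)" if "f \<in> range (delta V E s t n)" for c f
      using that by (auto simp flip: delta_scale)
  qed
qed

lemma glue_eq_glue_iff:
  "glue e1 em x = glue e1 em y \<longleftrightarrow> x = y \<or> x \<in> {e1, em} \<and> y \<in> {e1, em}"
  by (auto simp: glue_def)

lemma glue_eq_self: "x \<noteq> em \<Longrightarrow> glue e1 em x = x"
  by (simp add: glue_def)

locale source_sink_gluing =
  fixes V :: "'v set" and E :: "'e set" and s t :: "'e \<Rightarrow> 'v" and e1 em :: 'v
  assumes quiver: "quiver V E s t"
    and e1_source: "\<forall>a\<in>E. t a \<noteq> e1"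
    and em_sink: "\<forall>a\<in>E. s a \<noteq> em"
begin

abbreviation "V\<^sub>B \<equiv> glue e1 em ` V"
abbreviation "s\<^sub>B \<equiv> glue e1 em \<circ> s"
abbreviation "t\<^sub>B \<equiv> glue e1 em \<circ> t"

lemma quiver_glued: "quiver V\<^sub>B E s\<^sub>B t\<^sub>B"
  using quiver by (auto simp: quiver_def)

lemma paths_subset_glued: "paths E s t n \<subseteq> paths E s\<^sub>B t\<^sub>B n"
  by (auto simp: paths_def)

lemma cbasis_Inl_not_glued:
  assumes "(g, Inl e) \<in> cbasis V E s t n" "1 \<le> n"
  shows "e \<noteq> e1" "e \<noteq> em"
proof -
  have "g \<in> paths E s t n" "s (hd g) = e" "t (last g) = e"
    using assms(1) by (auto simp: cbasis_def psrc_def ptgt_def)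
  then show "e \<noteq> e1" "e \<noteq> em"
    using paths_hd_last[OF _ assms(2)] e1_source em_sink by metis+
qed

lemma cbasis_subset_glued:
  assumes "1 \<le> n"
  shows "cbasis V E s t n \<subseteq> cbasis V\<^sub>B E s\<^sub>B t\<^sub>B n"
proof
  fix b assume b: "b \<in> cbasis V E s t n"
  then obtain g x where [simp]: "b = (g, x)" and g: "g \<in> paths E s\<^sub>B t\<^sub>B n"
    using paths_subset_glued by (auto simp: cbasis_def)
  show "b \<in> cbasis V\<^sub>B E s\<^sub>B t\<^sub>B n"
  proof (cases x)
    case (Inl e)
    then have "e \<noteq> em"
      using b cbasis_Inl_not_glued[OF _ assms] by simp
    then show ?thesis
      using b g Inl by (force simp: cbasis_def psrc_def ptgt_def glue_eq_self)
  next
    case (Inr a)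
    then show ?thesis
      using b g by (auto simp: cbasis_def psrc_def ptgt_def)
  qed
qed

lemma star_basis_cbasis:
  assumes "b \<in> cbasis V E s t n" "1 \<le> n"
  shows "star_basis e1 em b = b"
  using assms cbasis_Inl_not_glued
  by (auto simp: star_basis_def glue_eq_self split: prod.splits sum.splits)

lemma Dbasis_glued:
  assumes "b \<in> cbasis V E s t n" "1 \<le> n"
  shows "Dbasis E s\<^sub>B t\<^sub>B n b = Dbasis E s t n b"
proof (cases b)
  case (Pair g x)
  show ?thesis
  proof (cases x)
    case (Inl e)
    then have "e \<noteq> e1" "e \<noteq> em"
      using assms cbasis_Inl_not_glued Pair by blast+
    then have "glue e1 em v = e \<longleftrightarrow> v = e" for v
      by (auto simp: glue_def)
    then show ?thesis
      by (simp add: Pair Inl Dbasis_def)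
  qed (simp add: Pair Dbasis_Inr)
qed

lemma cbasis_glued_loop_in_cbasis:
  assumes "(g, Inl e) \<in> cbasis V\<^sub>B E s\<^sub>B t\<^sub>B m" "g \<in> paths E s t m" "s (hd g) = t (last g)"
    "1 \<le> m"
  shows "(g, Inl e) \<in> cbasis V E s t m"
proof -
  have "hd g \<in> E"
    using paths_hd_last[OF assms(2,4)] by blast
  moreover have "glue e1 em (s (hd g)) = e"
    using assms(1) by (simp add: cbasis_def psrc_def)
  ultimately have "s (hd g) = e" "e \<in> V"
    using em_sink quiver by (auto simp: glue_eq_self quiver_def)
  then show ?thesis
    using assms(2,3) by (auto simp: cbasis_def psrc_def ptgt_def)
qed

(* If appending an arrow a to gamma gives a path of Q_A, then s (hd gamma) and
   s a = t (last gamma) are both sources of arrows, hence differ from e_m, and gluing is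
   injective away from e_m; so gamma is already a cycle of Q_A.  Prepending is symmetric,
   with targets and e_1. *)
lemma Dbasis_glued_eq_0_on_paths:
  assumes "1 \<le> m" "b \<in> cbasis V\<^sub>B E s\<^sub>B t\<^sub>B m - cbasis V E s t m"
    "fst q \<in> paths E s t (Suc m)"
  shows "Dbasis E s\<^sub>B t\<^sub>B m b q = (0::'k::field)"
proof (cases b)
  case (Pair g x)
  show ?thesis
  proof (cases x)
    case (Inl e)
    have bB: "(g, Inl e) \<in> cbasis V\<^sub>B E s\<^sub>B t\<^sub>B m" and bA: "(g, Inl e) \<notin> cbasis V E s t m"
      using assms(2) Pair Inl by auto
    then have "g \<in> paths E s\<^sub>B t\<^sub>B m" and ends: "glue e1 em (s (hd g)) = e" "glue e1 em (t (last g)) = e"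
      by (auto simp: cbasis_def psrc_def ptgt_def)
    then have g: "g \<noteq> []" "hd g \<in> E" "last g \<in> E"
      using paths_hd_last[OF _ assms(1)] by blast+
    have "q \<noteq> (g @ [a], Inr a)" if a: "a \<in> E" "glue e1 em (s a) = e" for a
    proof
      assume "q = (g @ [a], Inr a)"
      then have "g \<in> paths E s t m" "t (last g) = s a"
        using assms(3) g(1) by (auto simp: paths_snoc_iff)
      moreover have "s (hd g) = s a"
        using ends(1) a glue_eq_glue_iff[of e1 em "s (hd g)" "s a"] em_sink g(2) by auto
      ultimately show False
        using cbasis_glued_loop_in_cbasis[OF bB _ _ assms(1)] bA by simp
    qed
    moreover have "q \<noteq> (c # g, Inr c)" if c: "c \<in> E" "glue e1 em (t c) = e" for c
    proof
      assume "q = (c # g, Inr c)"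
      then have "g \<in> paths E s t m" "t c = s (hd g)"
        using assms(3) g(1) by (auto simp: paths_Cons_iff)
      moreover have "t c = t (last g)"
        using ends(2) c glue_eq_glue_iff[of e1 em "t c" "t (last g)"] e1_source g(3) by auto
      ultimately show False
        using cbasis_glued_loop_in_cbasis[OF bB _ _ assms(1)] bA by simp
    qed
    ultimately have "(\<Sum>a\<in>{a\<in>E. s\<^sub>B a = e}. indic (g @ [a], Inr a) q) = (0::'k)"
      and "(\<Sum>c\<in>{c\<in>E. t\<^sub>B c = e}. indic (c # g, Inr c) q) = (0::'k)"
      by (auto simp: indic_def intro!: sum.neutral)
    then show ?thesis
      by (simp add: Pair Inl Dbasis_def)
  qed (simp add: Pair Dbasis_Inr)
qed

lemma delta_glued_eq:
  assumes "1 \<le> n" "\<And>b. b \<in> cbasis V\<^sub>B E s\<^sub>B t\<^sub>B n - cbasis V E s t n \<Longrightarrow> y b * Dbasis E s\<^sub>B t\<^sub>B n b q = 0"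
  shows "delta V\<^sub>B E s\<^sub>B t\<^sub>B n y q = delta V E s t n y q"
proof -
  have "delta V\<^sub>B E s\<^sub>B t\<^sub>B n y q = (\<Sum>b\<in>cbasis V E s t n. y b * Dbasis E s\<^sub>B t\<^sub>B n b q)"
    unfolding delta_def using finite_cbasis[OF quiver_glued] cbasis_subset_glued[OF assms(1)] assms(2)
    by (intro sum.mono_neutral_right) auto
  also have "\<dots> = delta V E s t n y q"
    unfolding delta_def by (intro sum.cong) (simp_all add: Dbasis_glued[OF _ assms(1)])
  finally show ?thesis .
qed

lemma delta_glued_cochain:
  assumes "f \<in> cochains V E s t n" "1 \<le> n"
  shows "delta V\<^sub>B E s\<^sub>B t\<^sub>B n f = delta V E s t n f"
proof
  fix q
  show "delta V\<^sub>B E s\<^sub>B t\<^sub>B n f q = delta V E s t n f q"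
  proof (rule delta_glued_eq[OF assms(2)])
    fix b assume "b \<in> cbasis V\<^sub>B E s\<^sub>B t\<^sub>B n - cbasis V E s t n"
    then have "f b = 0"
      using assms(1) by (simp add: cochain_vanishes)
    then show "f b * Dbasis E s\<^sub>B t\<^sub>B n b q = 0"
      by simp
  qed
qed

lemma delta_glued_on_paths:
  fixes y :: "('v, 'e, 'k::field) cochain"
  assumes "fst q \<in> paths E s t (Suc n)" "1 \<le> n"
  shows "delta V\<^sub>B E s\<^sub>B t\<^sub>B n y q = delta V E s t n y q"
proof (rule delta_glued_eq[OF assms(2)])
  fix b assume "b \<in> cbasis V\<^sub>B E s\<^sub>B t\<^sub>B n - cbasis V E s t n"
  then have "Dbasis E s\<^sub>B t\<^sub>B n b q = (0::'k)"
    by (rule Dbasis_glued_eq_0_on_paths[OF assms(2) _ assms(1)])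
  then show "y b * Dbasis E s\<^sub>B t\<^sub>B n b q = 0"
    by simp
qed

lemma cochains_subset_glued: "1 \<le> n \<Longrightarrow> cochains V E s t n \<subseteq> cochains V\<^sub>B E s\<^sub>B t\<^sub>B n"
  using cbasis_subset_glued unfolding cochains_def by blast

lemma kerD_subset_glued:
  assumes "1 \<le> n"
  shows "kerD V E s t n \<subseteq> (kerD V\<^sub>B E s\<^sub>B t\<^sub>B n :: ('v, 'e, 'k::field) cochain set)"
proof
  fix f :: "('v, 'e, 'k) cochain"
  assume "f \<in> kerD V E s t n"
  then have "f \<in> cochains V E s t n" "delta V E s t n f = 0"
    by (simp_all add: kerD_def)
  then show "f \<in> kerD V\<^sub>B E s\<^sub>B t\<^sub>B n"
  proof -
    have "f \<in> cochains V\<^sub>B E s\<^sub>B t\<^sub>B n"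
      using cochains_subset_glued[OF assms] \<open>f \<in> cochains V E s t n\<close> by blast
    moreover have "delta V\<^sub>B E s\<^sub>B t\<^sub>B n f = delta V E s t n f"
      by (rule delta_glued_cochain[OF \<open>f \<in> cochains V E s t n\<close> assms])
    ultimately show ?thesis
      using \<open>delta V E s t n f = 0\<close> by (simp add: kerD_def)
  qed
qed

lemma imD_subset_glued:
  assumes "1 \<le> n"
  shows "imD V E s t n \<subseteq> (imD V\<^sub>B E s\<^sub>B t\<^sub>B n :: ('v, 'e, 'k::field) cochain set)"
proof
  fix x :: "('v, 'e, 'k) cochain"
  assume "x \<in> imD V E s t n"
  then obtain f where f: "f \<in> cochains V E s t n" and x: "x = delta V E s t n f"
    by (auto simp: imD_def)
  have "x = delta V\<^sub>B E s\<^sub>B t\<^sub>B n f"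
    using x delta_glued_cochain[OF f assms] by simp
  moreover have "f \<in> cochains V\<^sub>B E s\<^sub>B t\<^sub>B n"
    using cochains_subset_glued[OF assms] f by blast
  ultimately show "x \<in> imD V\<^sub>B E s\<^sub>B t\<^sub>B n"
    by (simp add: imD_def)
qed

lemma kerD_Int_imD_glued:
  assumes "1 \<le> m"
  shows "kerD V E s t (Suc m) \<inter> imD V\<^sub>B E s\<^sub>B t\<^sub>B m = (imD V E s t m :: ('v, 'e, 'k::field) cochain set)"
    (is "?lhs = ?rhs")
proof
  show "?rhs \<subseteq> ?lhs"
    by (intro Int_greatest imD_subset_kerD imD_subset_glued assms)
next
  show "?lhs \<subseteq> ?rhs"
  proof
    fix x :: "('v, 'e, 'k) cochain"
    assume x: "x \<in> kerD V E s t (Suc m) \<inter> imD V\<^sub>B E s\<^sub>B t\<^sub>B m"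
    then obtain y where y: "x = delta V\<^sub>B E s\<^sub>B t\<^sub>B m y"
      unfolding imD_def by blast
    have "x q = delta V E s t m y q" for q
    proof (cases "q \<in> cbasis V E s t (Suc m)")
      case True
      then have "fst q \<in> paths E s t (Suc m)"
        by (auto simp: cbasis_def)
      then have "delta V\<^sub>B E s\<^sub>B t\<^sub>B m y q = delta V E s t m y q"
        by (rule delta_glued_on_paths[OF _ assms])
      then show ?thesis
        using y by simp
    next
      case False
      moreover have "x \<in> cochains V E s t (Suc m)"
        using x by (simp add: kerD_def)
      moreover have "delta V E s t m y \<in> cochains V E s t (Suc m)"
        by (rule delta_in_cochains[OF assms])
      ultimately show ?thesis
        by (simp add: cochain_vanishes)
    qed
    then have "x = delta V E s t m y" ..
    then show "x \<in> imD V E s t m"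
      by (simp add: delta_in_imD)
  qed
qed

lemma psi_cochain:
  assumes "f \<in> cochains V E s t n" "1 \<le> n"
  shows "psi V E s t e1 em n f = f"
proof
  fix q
  have "psi V E s t e1 em n f q = (\<Sum>b\<in>cbasis V E s t n. f b * indic b q)"
    unfolding psi_def by (intro sum.cong) (simp_all add: star_basis_cbasis[OF _ assms(2)])
  also have "\<dots> = f q"
    by (rule cochain_expansion[OF assms(1) finite_cbasis[OF quiver]])
  finally show "psi V E s t e1 em n f q = f q" .
qed

lemma dimHH_le_dimHH_glued:
  fixes K :: "'k::field itself"
  assumes "1 \<le> m"
  shows "dimHH V E s t (Suc m) K \<le> dimHH V\<^sub>B E s\<^sub>B t\<^sub>B (Suc m) K"
proof -
  let ?KA = "kerD V E s t (Suc m) :: ('v, 'e, 'k) cochain set"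
  let ?KB = "kerD V\<^sub>B E s\<^sub>B t\<^sub>B (Suc m) :: ('v, 'e, 'k) cochain set"
  let ?IB = "imD V\<^sub>B E s\<^sub>B t\<^sub>B m :: ('v, 'e, 'k) cochain set"
  have "fun_vs.dim ?KA + fun_vs.dim ?IB \<le> fun_vs.dim ?KB + fun_vs.dim (?KA \<inter> ?IB)"
  proof (rule fun_vs.dim_add_le_dim_Int)
    show "?KA \<subseteq> ?KB"
      by (rule kerD_subset_glued) simp
    show "?IB \<subseteq> ?KB"
      using assms by (rule imD_subset_kerD)
    show "?KB \<subseteq> fun_vs.span (indic ` cbasis V\<^sub>B E s\<^sub>B t\<^sub>B (Suc m))"
      using cochains_subset_span[OF quiver_glued] by (auto simp: kerD_def)
    show "finite (indic ` cbasis V\<^sub>B E s\<^sub>B t\<^sub>B (Suc m) :: ('v, 'e, 'k) cochain set)"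
      using finite_cbasis[OF quiver_glued] by simp
  qed (rule subspace_kerD subspace_imD)+
  moreover have "?KA \<inter> ?IB = imD V E s t m"
    by (rule kerD_Int_imD_glued[OF assms])
  ultimately show ?thesis
    by (simp add: dimHH_def kdim_def)
qed

end

theorem proposition6p11:
  fixes V :: "'v set" and E :: "'e set" and s t :: "'e \<Rightarrow> 'v" and e1 em :: 'v
    and n :: nat and K :: "'k::field itself"
  assumes "quiver V E s t"
    and "quiver_connected V E s t"
    and "e1 \<in> V" and "\<forall>a\<in>E. t a \<noteq> e1" and "\<exists>a\<in>E. s a = e1"
    and "em \<in> V" and "\<forall>a\<in>E. s a \<noteq> em" and "\<exists>a\<in>E. t a = em"
    and "n \<ge> 2"
  defines "VB \<equiv> glue e1 em ` V" and "sB \<equiv> glue e1 em \<circ> s" and "tB \<equiv> glue e1 em \<circ> t"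
  shows "(\<forall>f \<in> (kerD V E s t n :: ('e list \<times> ('v + 'e) \<Rightarrow> 'k) set).
            psi V E s t e1 em n f \<in> kerD VB E sB tB n)
       \<and> inj_on (psi V E s t e1 em n) (kerD V E s t n :: ('e list \<times> ('v + 'e) \<Rightarrow> 'k) set)
       \<and> psi V E s t e1 em n ` (imD V E s t (n - 1) :: ('e list \<times> ('v + 'e) \<Rightarrow> 'k) set)
            \<subseteq> imD VB E sB tB (n - 1)
       \<and> dimHH VB E sB tB n K - dimHH V E s t n K \<ge> 0"
proof -
  interpret source_sink_gluing V E s t e1 em
    using assms(1,4,7) by unfold_locales
  obtain m where n: "n = Suc m" and m: "1 \<le> m"
    using \<open>n \<ge> 2\<close> by (cases n) auto
  have psi_kerD: "psi V E s t e1 em n f = f" if "f \<in> kerD V E s t n" for f :: "('v, 'e, 'k) cochain"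
    using that psi_cochain[of f n] n by (simp add: kerD_def)
  have "imD V E s t (n - 1) \<subseteq> (kerD V E s t n :: ('v, 'e, 'k) cochain set)"
    using imD_subset_kerD[OF m] n by simp
  moreover have "kerD V E s t n \<subseteq> (kerD V\<^sub>B E s\<^sub>B t\<^sub>B n :: ('v, 'e, 'k) cochain set)"
    by (rule kerD_subset_glued) (simp add: n)
  moreover have "imD V E s t (n - 1) \<subseteq> (imD V\<^sub>B E s\<^sub>B t\<^sub>B (n - 1) :: ('v, 'e, 'k) cochain set)"
    using imD_subset_glued[OF m] n by simp
  moreover have "dimHH V E s t n K \<le> dimHH V\<^sub>B E s\<^sub>B t\<^sub>B n K"
    using dimHH_le_dimHH_glued[OF m] n by simp
  ultimately show ?thesis
    unfolding VB_def sB_def tB_def using psi_kerD by (auto simp: inj_on_def subset_iff)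
qed

end
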